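(* Let $\mathcal{X}$ be a set, let $r:\mathcal{X}\to\mathbb{R}$ be a measurable function, and let $p$ be a probability distribution on $\mathcal{X}$ such that $\mathbb{E}_{j\sim p}[\exp(r(j))]<\infty$. For $x\in\mathcal{X}$ define $$P(y=1\mid x)=\mathbb{E}_{j\sim p}\left[\frac{\exp(r(x))}{\exp(r(x))+\exp(r(j))}\right],\qquad l(x)=\log\frac{P(y=1\mid x)}{1-P(y=1\mid x)}.$$ Then with $C=\log\big(\mathbb{E}_{j\sim p}[\exp(r(j))]\big)$, for every $x\in\mathcal{X}$, $$l(x)\ge r(x)-C.$$
   Context: This models a binary classifier (logit $l$) trained on Bradley–Terry preference data with underlying reward $r$, where the positive-class probability of $x$ equals the expected Bradley–Terry probability that $x$ is preferred over a random competitor $j\sim p$. *)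

theory Defs
  imports "HOL-Probability.Probability"
begin

definition bt_prob :: "'a measure \<Rightarrow> ('a \<Rightarrow> real) \<Rightarrow> 'a \<Rightarrow> real" where
  "bt_prob p r x = (\<integral>j. exp (r x) / (exp (r x) + exp (r j)) \<partial>p)"

definition bt_logit :: "'a measure \<Rightarrow> ('a \<Rightarrow> real) \<Rightarrow> 'a \<Rightarrow> real" where
  "bt_logit p r x = ln (bt_prob p r x / (1 - bt_prob p r x))"

end

theory Submission
  imports Defs
begin

text \<open>
  For fixed \<open>a = exp (r x)\<close> the map \<open>t \<mapsto> a / (a + t)\<close> is convex on \<open>t > 0\<close>, so by
  Jensen's inequality \<open>P(y=1|x) \<ge> a / (a + m)\<close> with \<open>m = E[exp (r j)]\<close>: beating a random
  competitor is at least as likely as beating one of average strength \<open>m\<close>.  The odds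
  \<open>P / (1 - P)\<close> are increasing in \<open>P\<close>, and the odds of \<open>a / (a + m)\<close> are \<open>a / m\<close>,
  whose logarithm is \<open>r x - ln m\<close>.
\<close>

lemma convex_on_shifted_reciprocal:
  fixes a c :: real
  assumes "c \<ge> 0"
  shows "convex_on {-a<..} (\<lambda>t. c / (a + t))"
proof (rule convex_on_realI)
  show "((\<lambda>t. c / (a + t)) has_real_derivative - c / (a + t)^2) (at t)" if "t \<in> {-a<..}" for t
    using that by (auto intro!: derivative_eq_intros simp: power2_eq_square)
  show "- c / (a + s)^2 \<le> - c / (a + t)^2" if "s \<in> {-a<..}" "t \<in> {-a<..}" "s \<le> t" for s t
    using that assms by (auto intro!: divide_left_mono power_mono mult_pos_pos)
qed simp

lemma ln_odds_mono:
  fixes q P :: real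
  assumes "0 < q" "q \<le> P" "P < 1"
  shows "ln (q / (1 - q)) \<le> ln (P / (1 - P))"
proof (rule ln_mono)
  show "0 < q / (1 - q)" using assms by simp
  show "q / (1 - q) \<le> P / (1 - P)" using assms by (intro frac_le) auto
qed

context prob_space
begin

lemma bt_prob_ge_against_mean:
  assumes [measurable]: "r \<in> borel_measurable M"
    and "integrable M (\<lambda>j. exp (r j))"
  shows "exp (r x) / (exp (r x) + expectation (\<lambda>j. exp (r j))) \<le> bt_prob M r x"
proof -
  let ?q = "\<lambda>t. exp (r x) / (exp (r x) + t)"
  have "integrable M (\<lambda>j. ?q (exp (r j)))"
    by (rule integrable_const_bound[where B = 1]) (auto simp: add_pos_pos)
  moreover have "convex_on {0<..} ?q"
    by (rule convex_on_subset[OF convex_on_shifted_reciprocal]) auto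
  ultimately show ?thesis
    unfolding bt_prob_def using assms(2) by (intro jensens_inequality[where I = "{0<..}"]) auto
qed

lemma bt_prob_less_one:
  assumes [measurable]: "r \<in> borel_measurable M"
  shows "bt_prob M r x < 1"
  unfolding bt_prob_def
proof (rule expectation_less)
  show "integrable M (\<lambda>j. exp (r x) / (exp (r x) + exp (r j)))"
    by (rule integrable_const_bound[where B = 1]) (auto simp: add_pos_pos)
qed (auto simp: add_pos_pos)

end

theorem mainTheorem2:
  fixes p :: "'a measure" and r :: "'a \<Rightarrow> real" and x :: 'a
  assumes "prob_space p"
    and "r \<in> borel_measurable p"
    and "integrable p (\<lambda>j. exp (r j))"
    and "x \<in> space p"
  shows "bt_logit p r x \<ge> r x - ln (\<integral>j. exp (r j) \<partial>p)"
proof -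
  interpret prob_space p by fact
  define a where "a = exp (r x)"
  define m where "m = (\<integral>j. exp (r j) \<partial>p)"
  have "a > 0" unfolding a_def by simp
  have "m > 0" unfolding m_def using assms(3) by (intro expectation_greater) auto
  have "ln (a / (a + m) / (1 - a / (a + m))) \<le> bt_logit p r x"
    unfolding bt_logit_def a_def m_def
    using \<open>m > 0\<close> assms(2,3)
    by (intro ln_odds_mono bt_prob_ge_against_mean bt_prob_less_one) (auto simp: m_def add_pos_pos)
  also have "1 - a / (a + m) = m / (a + m)"
    using \<open>a > 0\<close> \<open>m > 0\<close> by (simp add: field_simps)
  also have "a / (a + m) / (m / (a + m)) = a / m"
    using \<open>a > 0\<close> \<open>m > 0\<close> by simp
  also have "ln (a / m) = r x - ln m"
    using \<open>m > 0\<close> by (simp add: ln_div a_def)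
  finally show ?thesis unfolding m_def .
qed

end
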